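(* Fix $d\ge1$ and $\varepsilon>0$. If $f_1,f_2\in\mathsf{Tree}_d$ satisfy $\mathrm{MSE}(f_i)\le R(\mathsf{Tree}_d)+\varepsilon$ for $i\in\{1,2\}$, then \[ D(f_1,f_2)\le4\big(R(\mathsf{Tree}_d)-R(\mathsf{Tree}_{2d})+\varepsilon\big). \]
   Context: $P$ is a distribution on $\mathcal X\times\mathcal Y$ with $\mathcal X\subseteq\mathbb R^m$, $\mathcal Y\subseteq\mathbb R$; expectations are over $(x,y)\sim P$; $\mathrm{MSE}(f)=\mathbb E[(y-f(x))^2]$, $R(\mathcal F)=\inf_{f\in\mathcal F}\mathrm{MSE}(f)$, $D(f_1,f_2)=\mathbb E[(f_1(x)-f_2(x))^2]$. An axis-aligned regression tree is a rooted binary tree each internal node of which is labeled by a coordinate $j\in[m]$ and threshold $t\in\mathbb R$ and sends $x$ to the left child if $x_j\le t$ and to the right child otherwise; each leaf is labeled by a constant in $[0,1]$; the tree computes the label of the leaf reached by $x$. $\mathsf{Tree}_d$ is the class of predictors computed by such trees of depth at most $d$. *)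

theory Defs
  imports "HOL-Probability.Probability"
begin

datatype 'm rtree = Leaf real | Node 'm real "'m rtree" "'m rtree"

fun eval_tree :: "'m rtree \<Rightarrow> real ^ 'm \<Rightarrow> real" where
  "eval_tree (Leaf c) x = c"
| "eval_tree (Node j t l r) x = (if x $ j \<le> t then eval_tree l x else eval_tree r x)"

fun depth :: "'m rtree \<Rightarrow> nat" where
  "depth (Leaf c) = 0"
| "depth (Node j t l r) = Suc (max (depth l) (depth r))"

fun labels_ok :: "'m rtree \<Rightarrow> bool" where
  "labels_ok (Leaf c) \<longleftrightarrow> 0 \<le> c \<and> c \<le> 1"
| "labels_ok (Node j t l r) \<longleftrightarrow> labels_ok l \<and> labels_ok r"

definition Tree :: "nat \<Rightarrow> (real ^ 'm \<Rightarrow> real) set" where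
  "Tree d = {eval_tree T | T. labels_ok T \<and> depth T \<le> d}"

definition MSE :: "((real ^ 'm) \<times> real) measure \<Rightarrow> (real ^ 'm \<Rightarrow> real) \<Rightarrow> real" where
  "MSE P f = (\<integral>z. (snd z - f (fst z))\<^sup>2 \<partial>P)"

definition Risk :: "((real ^ 'm) \<times> real) measure \<Rightarrow> (real ^ 'm \<Rightarrow> real) set \<Rightarrow> real" where
  "Risk P F = (INF f\<in>F. MSE P f)"

definition Dist :: "((real ^ 'm) \<times> real) measure \<Rightarrow> (real ^ 'm \<Rightarrow> real) \<Rightarrow> (real ^ 'm \<Rightarrow> real) \<Rightarrow> real" where
  "Dist P f1 f2 = (\<integral>z. (f1 (fst z) - f2 (fst z))\<^sup>2 \<partial>P)"

end

theory Submission imports Defs begin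

text \<open>Grafting a copy of the second tree below every leaf of the first one and averaging the
  labels shows that the midpoint g = (f1 + f2)/2 of two depth-d trees is a depth-2d tree.
  The parallelogram identity gives MSE g = (MSE f1 + MSE f2)/2 - D(f1,f2)/4, and
  R(Tree 2d) \<le> MSE g then bounds D(f1,f2) by 2 MSE f1 + 2 MSE f2 - 4 R(Tree 2d).\<close>

fun map_leaves :: "(real \<Rightarrow> real) \<Rightarrow> 'm rtree \<Rightarrow> 'm rtree" where
  "map_leaves h (Leaf c) = Leaf (h c)"
| "map_leaves h (Node j t l r) = Node j t (map_leaves h l) (map_leaves h r)"

fun graft :: "(real \<Rightarrow> real \<Rightarrow> real) \<Rightarrow> 'm rtree \<Rightarrow> 'm rtree \<Rightarrow> 'm rtree" where
  "graft g (Leaf c) S = map_leaves (g c) S"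
| "graft g (Node j t l r) S = Node j t (graft g l S) (graft g r S)"

lemma eval_tree_map_leaves [simp]: "eval_tree (map_leaves h S) x = h (eval_tree S x)"
  by (induction S) auto

lemma depth_map_leaves [simp]: "depth (map_leaves h S) = depth S"
  by (induction S) auto

lemma labels_ok_map_leaves:
  "(\<And>c. c \<in> {0..1} \<Longrightarrow> h c \<in> {0..1}) \<Longrightarrow> labels_ok S \<Longrightarrow> labels_ok (map_leaves h S)"
  by (induction S) auto

lemma eval_tree_graft [simp]: "eval_tree (graft g T S) x = g (eval_tree T x) (eval_tree S x)"
  by (induction T) auto

lemma depth_graft: "depth (graft g T S) \<le> depth T + depth S"
  by (induction T) auto

lemma labels_ok_graft:
  assumes "\<And>a b. a \<in> {0..1} \<Longrightarrow> b \<in> {0..1} \<Longrightarrow> g a b \<in> {0..1}"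
  shows "labels_ok T \<Longrightarrow> labels_ok S \<Longrightarrow> labels_ok (graft g T S)"
proof (induction T)
  case (Leaf c)
  then show ?case
    using labels_ok_map_leaves[of "g c" S] assms[of c] by simp
qed simp

lemma Tree_combine:
  assumes "f1 \<in> Tree d" "f2 \<in> Tree e"
    and "\<And>a b. a \<in> {0..1} \<Longrightarrow> b \<in> {0..1} \<Longrightarrow> g a b \<in> {0..1}"
  shows "(\<lambda>x. g (f1 x) (f2 x)) \<in> Tree (d + e)"
proof -
  obtain T S where "f1 = eval_tree T" "labels_ok T" "depth T \<le> d"
    and "f2 = eval_tree S" "labels_ok S" "depth S \<le> e"
    using assms(1,2) unfolding Tree_def by blast
  moreover have "depth (graft g T S) \<le> d + e"
    using depth_graft[of g T S] \<open>depth T \<le> d\<close> \<open>depth S \<le> e\<close> by linarith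
  ultimately show ?thesis
    unfolding Tree_def using labels_ok_graft[OF assms(3)] by (auto intro!: exI[of _ "graft g T S"])
qed

lemma Tree_midpoint:
  assumes "f1 \<in> Tree d" "f2 \<in> Tree e"
  shows "(\<lambda>x. (f1 x + f2 x) / 2) \<in> Tree (d + e)"
  using Tree_combine[OF assms, of "\<lambda>a b. (a + b) / 2"] by simp

lemma Tree_range:
  fixes f :: "real ^ 'm \<Rightarrow> real"
  assumes "f \<in> Tree d"
  shows "f x \<in> {0..1}"
proof -
  have "labels_ok T \<Longrightarrow> eval_tree T x \<in> {0..1}" for T :: "'m rtree"
    by (induction T) auto
  then show ?thesis
    using assms unfolding Tree_def by blast
qed

lemma borel_measurable_eval_tree: "eval_tree T \<in> borel_measurable borel"
proof (induction T)
  case (Node j t l r)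
  have "{x::real ^ 'a. x $ j \<le> t} \<in> sets borel"
    by (intro borel_closed closed_Collect_le continuous_intros)
  moreover have "eval_tree (Node j t l r) =
      (\<lambda>x. if x \<in> {x. x $ j \<le> t} then eval_tree l x else eval_tree r x)"
    by auto
  ultimately show ?case
    using measurable_If_set[OF Node.IH] by (metis (no_types) space_borel inf_top_right)
qed simp

lemma Tree_borel_measurable: "f \<in> Tree d \<Longrightarrow> f \<in> borel_measurable borel"
  unfolding Tree_def using borel_measurable_eval_tree by blast

lemma borel_measurable_fst_comp_sets_borel:
  fixes P :: "('a::euclidean_space \<times> 'b::euclidean_space) measure"
  assumes "sets P = sets borel" "f \<in> borel_measurable borel"
  shows "(\<lambda>z. f (fst z)) \<in> borel_measurable P"
  unfolding measurable_cong_sets[OF assms(1) refl]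
  by (rule measurable_compose[OF _ assms(2)])
    (simp add: borel_measurable_continuous_onI continuous_on_fst)

lemma borel_measurable_snd_sets_borel:
  fixes P :: "('a::euclidean_space \<times> 'b::euclidean_space) measure"
  assumes "sets P = sets borel"
  shows "snd \<in> borel_measurable P"
  unfolding measurable_cong_sets[OF assms refl]
  by (simp add: borel_measurable_continuous_onI continuous_on_snd)

lemma integrable_square_loss:
  fixes P :: "('a::euclidean_space \<times> real) measure"
  assumes "prob_space P" "sets P = sets borel" "integrable P (\<lambda>z. (snd z)\<^sup>2)"
    and "f \<in> borel_measurable borel" "\<And>x. \<bar>f x\<bar> \<le> (B::real)"
  shows "integrable P (\<lambda>z. (snd z - f (fst z))\<^sup>2)"
proof (rule Bochner_Integration.integrable_bound)
  interpret prob_space P by fact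
  show "integrable P (\<lambda>z. 2 * (snd z)\<^sup>2 + 2 * B\<^sup>2)"
    using assms(3) by simp
  show "(\<lambda>z. (snd z - f (fst z))\<^sup>2) \<in> borel_measurable P"
    using borel_measurable_snd_sets_borel[OF assms(2)] borel_measurable_fst_comp_sets_borel[OF assms(2,4)]
    by measurable
  have "(y - c)\<^sup>2 \<le> 2 * y\<^sup>2 + 2 * B\<^sup>2" if "\<bar>c\<bar> \<le> B" for y c :: real
  proof -
    have "c\<^sup>2 \<le> B\<^sup>2"
      using that by (metis abs_ge_zero power2_abs power_mono)
    moreover have "(y - c)\<^sup>2 \<le> 2 * y\<^sup>2 + 2 * c\<^sup>2"
      using zero_le_power2[of "y + c"] by (simp add: power2_eq_square algebra_simps)
    ultimately show ?thesis by linarith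
  qed
  then show "AE z in P. norm ((snd z - f (fst z))\<^sup>2) \<le> norm (2 * (snd z)\<^sup>2 + 2 * B\<^sup>2)"
    using assms(5) by (auto intro!: AE_I2)
qed

lemma integrable_square_diff:
  fixes P :: "('a::euclidean_space \<times> 'b::euclidean_space) measure"
  assumes "prob_space P" "sets P = sets borel"
    and "f1 \<in> borel_measurable borel" "f2 \<in> borel_measurable borel"
    and "\<And>x. \<bar>f1 x - f2 x\<bar> \<le> (B::real)"
  shows "integrable P (\<lambda>z. (f1 (fst z) - f2 (fst z))\<^sup>2)"
proof -
  interpret prob_space P by fact
  show ?thesis
  proof (rule integrable_const_bound[where B = "B\<^sup>2"])
    show "AE z in P. norm ((f1 (fst z) - f2 (fst z))\<^sup>2) \<le> B\<^sup>2"
      using power_mono[OF assms(5) abs_ge_zero, of _ 2] by (auto intro!: AE_I2)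
    show "(\<lambda>z. (f1 (fst z) - f2 (fst z))\<^sup>2) \<in> borel_measurable P"
      using borel_measurable_fst_comp_sets_borel[OF assms(2,3)] borel_measurable_fst_comp_sets_borel[OF assms(2,4)]
      by measurable
  qed
qed

lemma MSE_midpoint:
  assumes "integrable P (\<lambda>z. (snd z - f1 (fst z))\<^sup>2)"
    and "integrable P (\<lambda>z. (snd z - f2 (fst z))\<^sup>2)"
    and "integrable P (\<lambda>z. (f1 (fst z) - f2 (fst z))\<^sup>2)"
  shows "MSE P (\<lambda>x. (f1 x + f2 x) / 2) = MSE P f1 / 2 + MSE P f2 / 2 - Dist P f1 f2 / 4"
proof -
  have "(y - (a + b) / 2)\<^sup>2 = (y - a)\<^sup>2 / 2 + (y - b)\<^sup>2 / 2 - (a - b)\<^sup>2 / 4" for y a b :: real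
    by (simp add: power2_eq_square field_simps)
  then show ?thesis
    unfolding MSE_def Dist_def using assms by simp
qed

lemma Risk_le_MSE: "f \<in> F \<Longrightarrow> Risk P F \<le> MSE P f"
  unfolding Risk_def MSE_def
  by (rule cINF_lower) (auto intro!: bdd_belowI[of _ 0] integral_nonneg_AE)

theorem corollary3:
  fixes P :: "((real ^ 'm) \<times> real) measure"
    and d :: nat and \<epsilon> :: real and f1 f2 :: "real ^ 'm \<Rightarrow> real"
  assumes "prob_space P"
    and "sets P = sets borel"
    and "integrable P (\<lambda>z. (snd z)\<^sup>2)"
    and "d \<ge> 1" and "\<epsilon> > 0"
    and "f1 \<in> Tree d" and "f2 \<in> Tree d"
    and "MSE P f1 \<le> Risk P (Tree d) + \<epsilon>"
    and "MSE P f2 \<le> Risk P (Tree d) + \<epsilon>"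
  shows "Dist P f1 f2 \<le> 4 * (Risk P (Tree d) - Risk P (Tree (2 * d)) + \<epsilon>)"
proof -
  have bounded: "\<bar>f1 x\<bar> \<le> 1" "\<bar>f2 x\<bar> \<le> 1" "\<bar>f1 x - f2 x\<bar> \<le> 1" for x
    using Tree_range[OF assms(6), of x] Tree_range[OF assms(7), of x] by auto
  have "MSE P (\<lambda>x. (f1 x + f2 x) / 2) = MSE P f1 / 2 + MSE P f2 / 2 - Dist P f1 f2 / 4"
    using Tree_borel_measurable[OF assms(6)] Tree_borel_measurable[OF assms(7)] bounded
    by (intro MSE_midpoint integrable_square_loss integrable_square_diff assms(1-3))
  moreover have "Risk P (Tree (2 * d)) \<le> MSE P (\<lambda>x. (f1 x + f2 x) / 2)"
    using Risk_le_MSE Tree_midpoint[OF assms(6,7)] by (metis mult_2)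
  ultimately show ?thesis
    using assms(8,9) by (simp add: field_simps)
qed

end
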